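(* Let $(R,\mathfrak m)$ be a regular local ring with $\dim R\ge 2$, let $\{(R_i,\mathfrak m_i)\}_{i\ge 0}$ be an infinite sequence of local quadratic transforms with $R_0=R$, and let $S=\bigcup_{i\ge0}R_i$. The following are equivalent: (1) $S$ is dominated by a DVR; (2) $S$ is a DVR; (3) $S$ is a Noetherian ring.
   Context: A local quadratic transform of a regular local ring $(A,\mathfrak n)$ is a local ring $A[\mathfrak n/x]_{\mathfrak q}$ with $x\in\mathfrak n\setminus\mathfrak n^2$ and $\mathfrak q$ a prime ideal of $A[\mathfrak n/x]$ containing $\mathfrak n$. The sequence satisfies: for each $i\ge 0$, $R_{i+1}$ is a local quadratic transform of $R_i$, $R_i\subsetneq R_{i+1}$, and each $R_i$ is a regular local ring of dimension at least $2$ with maximal ideal $\mathfrak m_i$. $S$ is local with maximal ideal $\bigcup_i\mathfrak m_i$; a local ring $(D,\mathfrak M_D)$ dominates $S$ if $S\subseteq D$ and $\mathfrak M_D\cap S$ is the maximal ideal of $S$. *)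

theory Defs
  imports Main "HOL-Library.Extended_Nat"
begin

text \<open>All rings considered are subrings of an ambient field of type 'a
(local quadratic transforms of a domain live in its fraction field).\<close>

definition subring :: "'a::field set \<Rightarrow> bool" where
  "subring A \<longleftrightarrow> 0 \<in> A \<and> 1 \<in> A \<and>
     (\<forall>x\<in>A. \<forall>y\<in>A. x + y \<in> A \<and> x * y \<in> A \<and> - x \<in> A)"

definition ideal_of :: "'a::field set \<Rightarrow> 'a set \<Rightarrow> bool" where
  "ideal_of A I \<longleftrightarrow> I \<subseteq> A \<and> 0 \<in> I \<and> (\<forall>x\<in>I. \<forall>y\<in>I. x + y \<in> I)
     \<and> (\<forall>a\<in>A. \<forall>x\<in>I. a * x \<in> I)"

definition max_ideal :: "'a::field set \<Rightarrow> 'a set \<Rightarrow> bool" where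
  "max_ideal A I \<longleftrightarrow> ideal_of A I \<and> I \<noteq> A \<and>
     (\<forall>J. ideal_of A J \<and> I \<subseteq> J \<and> J \<noteq> A \<longrightarrow> J = I)"

definition prime_ideal :: "'a::field set \<Rightarrow> 'a set \<Rightarrow> bool" where
  "prime_ideal A P \<longleftrightarrow> ideal_of A P \<and> P \<noteq> A \<and>
     (\<forall>a\<in>A. \<forall>b\<in>A. a * b \<in> P \<longrightarrow> a \<in> P \<or> b \<in> P)"

definition local_ring :: "'a::field set \<Rightarrow> bool" where
  "local_ring A \<longleftrightarrow> subring A \<and> (\<exists>!I. max_ideal A I)"

definition maxideal :: "'a::field set \<Rightarrow> 'a set" where
  "maxideal A = (THE I. max_ideal A I)"

definition span :: "'a::field set \<Rightarrow> 'a set \<Rightarrow> 'a set" where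
  "span A X = {\<Sum>x\<in>F. c x * x | F c. finite F \<and> F \<subseteq> X \<and> (\<forall>x\<in>F. c x \<in> A)}"

definition noetherian :: "'a::field set \<Rightarrow> bool" where
  "noetherian A \<longleftrightarrow> subring A \<and>
     (\<forall>I. ideal_of A I \<longrightarrow> (\<exists>F. finite F \<and> F \<subseteq> I \<and> I = span A F))"

definition krull_dim :: "'a::field set \<Rightarrow> enat" where
  "krull_dim A = Sup {enat n | n. \<exists>p :: nat \<Rightarrow> 'a set.
      (\<forall>i\<le>n. prime_ideal A (p i)) \<and> (\<forall>i<n. p i \<subset> p (Suc i))}"

definition regular_local :: "'a::field set \<Rightarrow> bool" where
  "regular_local A \<longleftrightarrow> noetherian A \<and> local_ring A \<and>
     (\<exists>d F. krull_dim A = enat d \<and> finite F \<and> F \<subseteq> A \<and> card F \<le> d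
            \<and> span A F = maxideal A)"

definition ring_adj :: "'a::field set \<Rightarrow> 'a set \<Rightarrow> 'a set" where
  "ring_adj A X = \<Inter>{B. subring B \<and> A \<union> X \<subseteq> B}"

definition localize :: "'a::field set \<Rightarrow> 'a set \<Rightarrow> 'a set" where
  "localize B q = {b / c | b c. b \<in> B \<and> c \<in> B \<and> c \<notin> q}"

text \<open>T = A[n/x]_q with x in n minus n^2 and q a prime of A[n/x] containing n.\<close>
definition local_quadratic_transform :: "'a::field set \<Rightarrow> 'a set \<Rightarrow> bool" where
  "local_quadratic_transform A T \<longleftrightarrow>
     (\<exists>x q. x \<in> maxideal A \<and>
        x \<notin> span A {y * z | y z. y \<in> maxideal A \<and> z \<in> maxideal A} \<and>
        prime_ideal (ring_adj A ((\<lambda>y. y / x) ` maxideal A)) q \<and>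
        maxideal A \<subseteq> q \<and>
        T = localize (ring_adj A ((\<lambda>y. y / x) ` maxideal A)) q)"

definition frac :: "'a::field set \<Rightarrow> 'a set" where
  "frac D = {a / b | a b. a \<in> D \<and> b \<in> D \<and> b \<noteq> 0}"

definition DVR :: "'a::field set \<Rightarrow> bool" where
  "DVR D \<longleftrightarrow> subring D \<and>
     (\<exists>v :: 'a \<Rightarrow> int.
        (\<forall>x\<in>frac D - {0}. \<forall>y\<in>frac D - {0}.
            v (x * y) = v x + v y \<and> (x + y \<noteq> 0 \<longrightarrow> v (x + y) \<ge> min (v x) (v y))) \<and>
        v ` (frac D - {0}) = UNIV \<and>
        D = insert 0 {x \<in> frac D - {0}. v x \<ge> 0})"

definition dominates :: "'a::field set \<Rightarrow> 'a set \<Rightarrow> bool" where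
  "dominates D S \<longleftrightarrow> local_ring D \<and> local_ring S \<and> S \<subseteq> D \<and>
     maxideal D \<inter> S = maxideal S"

end

theory Submission
  imports Defs
begin

text \<open>Each \<open>R\<^sub>i\<^sub>+\<^sub>1\<close> dominates \<open>R\<^sub>i\<close> and
  \<open>m\<^sub>i R\<^sub>i\<^sub>+\<^sub>1 = x\<^sub>i R\<^sub>i\<^sub>+\<^sub>1\<close>, so \<open>S\<close> is local, its units are those of the \<open>R\<^sub>i\<close>, and every element of
  \<open>m\<^sub>S \<inter> R\<^sub>j\<close> is divisible in \<open>S\<close> by \<open>x\<^sub>j\<close>. A local domain whose maximal ideal is generated
  by a nonzero \<open>z\<close>, and in which no nonzero element is divisible by all powers of \<open>z\<close>, is a DVR
  (valuation: the exponent of \<open>z\<close>).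

  If \<open>S\<close> is Noetherian, the finitely many generators of \<open>m\<^sub>S\<close> lie in some \<open>R\<^sub>j\<close>, so
  \<open>m\<^sub>S = x\<^sub>j S\<close>, and ascending chains of principal ideals forbid divisibility by all powers.
  If \<open>S\<close> is dominated by a DVR with valuation \<open>v\<close>, the positive integers \<open>v(x\<^sub>i)\<close> decrease
  and hence stabilise; from then on the \<open>x\<^sub>i\<close> are associates of a single \<open>x\<^sub>N\<close>, so
  \<open>m\<^sub>S = x\<^sub>N S\<close>, and \<open>v\<close> bounds the powers of \<open>x\<^sub>N\<close> dividing an element. A DVR is Noetherian
  and dominates itself, which closes the cycle.\<close>

definition unit_in :: "'a::field set \<Rightarrow> 'a \<Rightarrow> bool" where
  "unit_in A y \<longleftrightarrow> y \<in> A \<and> y \<noteq> 0 \<and> inverse y \<in> A"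

definition principal_ideal :: "'a::field set \<Rightarrow> 'a \<Rightarrow> 'a set" where
  "principal_ideal A a = {c * a | c. c \<in> A}"

lemma subring_0: "subring A \<Longrightarrow> 0 \<in> A"
  and subring_1: "subring A \<Longrightarrow> 1 \<in> A"
  and subring_add: "subring A \<Longrightarrow> x \<in> A \<Longrightarrow> y \<in> A \<Longrightarrow> x + y \<in> A"
  and subring_mult: "subring A \<Longrightarrow> x \<in> A \<Longrightarrow> y \<in> A \<Longrightarrow> x * y \<in> A"
  and subring_uminus: "subring A \<Longrightarrow> x \<in> A \<Longrightarrow> - x \<in> A"
  by (simp_all add: subring_def)

lemma subring_power: "subring A \<Longrightarrow> x \<in> A \<Longrightarrow> x ^ n \<in> A"
  by (induction n) (auto intro: subring_1 subring_mult)

lemma subring_sum: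
  assumes "subring A" "finite F" "\<And>x. x \<in> F \<Longrightarrow> f x \<in> A"
  shows "sum f F \<in> A"
  using assms(2,3)
  by (induction F rule: finite_induct) (auto intro: subring_0[OF assms(1)] subring_add[OF assms(1)])

lemma unit_in_1: "subring A \<Longrightarrow> unit_in A 1"
  by (simp add: unit_in_def subring_1)

lemma unit_in_mult: "subring A \<Longrightarrow> unit_in A u \<Longrightarrow> unit_in A w \<Longrightarrow> unit_in A (u * w)"
  unfolding unit_in_def by (auto intro: subring_mult simp: inverse_mult_distrib)

lemma unit_in_inverse: "unit_in A u \<Longrightarrow> unit_in A (inverse u)"
  unfolding unit_in_def by auto

lemma unit_in_mono: "A \<subseteq> B \<Longrightarrow> unit_in A u \<Longrightarrow> unit_in B u"
  unfolding unit_in_def by blast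

lemma unit_in_if_mult_eq_1: "c \<in> A \<Longrightarrow> z \<in> A \<Longrightarrow> c * z = 1 \<Longrightarrow> unit_in A z"
  unfolding unit_in_def by (metis inverse_unique mult.commute mult_zero_right zero_neq_one)

lemma ideal_of_subset: "ideal_of A I \<Longrightarrow> I \<subseteq> A"
  and ideal_of_0: "ideal_of A I \<Longrightarrow> 0 \<in> I"
  and ideal_of_add: "ideal_of A I \<Longrightarrow> x \<in> I \<Longrightarrow> y \<in> I \<Longrightarrow> x + y \<in> I"
  and ideal_of_mult: "ideal_of A I \<Longrightarrow> a \<in> A \<Longrightarrow> x \<in> I \<Longrightarrow> a * x \<in> I"
  by (simp_all add: ideal_of_def)

lemma ideal_of_eq_if_1: "ideal_of A I \<Longrightarrow> 1 \<in> I \<Longrightarrow> I = A"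
  by (metis ideal_of_mult ideal_of_subset mult.right_neutral subsetI subset_antisym)

lemma ideal_of_nonunit: "ideal_of A I \<Longrightarrow> I \<noteq> A \<Longrightarrow> y \<in> I \<Longrightarrow> \<not> unit_in A y"
  unfolding unit_in_def by (metis ideal_of_eq_if_1 ideal_of_mult left_inverse)

lemma ideal_of_Union_incseq:
  assumes "incseq I" and I: "\<And>n. ideal_of A (I n)"
  shows "ideal_of A (\<Union>n. I n)"
  unfolding ideal_of_def
proof (intro conjI ballI)
  show "(\<Union>n. I n) \<subseteq> A" using ideal_of_subset[OF I] by blast
  show "0 \<in> (\<Union>n. I n)" using ideal_of_0[OF I] by blast
  fix y z assume "y \<in> (\<Union>n. I n)" "z \<in> (\<Union>n. I n)"
  then obtain m n where "y \<in> I m" "z \<in> I n" by blast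
  moreover have "I m \<subseteq> I (max m n)" "I n \<subseteq> I (max m n)"
    using incseqD[OF assms(1)] by (simp_all add: max.cobounded1 max.cobounded2)
  ultimately have "y + z \<in> I (max m n)" using ideal_of_add[OF I] by blast
  then show "y + z \<in> (\<Union>n. I n)" by blast
next
  fix a y assume "a \<in> A" "y \<in> (\<Union>n. I n)"
  then obtain n where "y \<in> I n" by blast
  then have "a * y \<in> I n" using ideal_of_mult[OF I] \<open>a \<in> A\<close> by blast
  then show "a * y \<in> (\<Union>n. I n)" by blast
qed

lemma finite_subset_incseq_Union:
  fixes A :: "nat \<Rightarrow> 'a set"
  assumes "incseq A" "finite F" "F \<subseteq> (\<Union>n. A n)"
  obtains n where "F \<subseteq> A n"
proof -
  have "A i \<subseteq> A j \<or> A j \<subseteq> A i" for i j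
    using incseqD[OF assms(1)] nle_le by metis
  then have "subset.chain UNIV (range A)"
    unfolding subset_chain_def by blast
  then show thesis
    using finite_subset_Union_chain[of F "range A" UNIV] assms(2,3) that by auto
qed

lemma ideal_of_principal_ideal:
  assumes A: "subring A" and "a \<in> A"
  shows "ideal_of A (principal_ideal A a)"
  unfolding ideal_of_def principal_ideal_def
proof (intro conjI ballI)
  show "{c * a |c. c \<in> A} \<subseteq> A" using assms subring_mult by blast
  show "0 \<in> {c * a |c. c \<in> A}" using subring_0[OF A] by force
  fix y z assume "y \<in> {c * a |c. c \<in> A}" "z \<in> {c * a |c. c \<in> A}"
  then obtain c d where "c \<in> A" "d \<in> A" "y = c * a" "z = d * a" by blast
  then have "y + z = (c + d) * a" "c + d \<in> A"
    by (simp_all add: distrib_right subring_add[OF A])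
  then show "y + z \<in> {c * a |c. c \<in> A}" by blast
next
  fix b y assume "b \<in> A" "y \<in> {c * a |c. c \<in> A}"
  then obtain c where "c \<in> A" "y = c * a" by blast
  then have "b * y = (b * c) * a" "b * c \<in> A"
    by (simp_all add: mult.assoc subring_mult[OF A \<open>b \<in> A\<close>])
  then show "b * y \<in> {c * a |c. c \<in> A}" by blast
qed

lemma principal_ideal_trans:
  assumes A: "subring A" and "a \<in> principal_ideal A b"
  shows "principal_ideal A a \<subseteq> principal_ideal A b"
proof
  obtain d where d: "d \<in> A" "a = d * b" using assms(2) unfolding principal_ideal_def by blast
  fix y assume "y \<in> principal_ideal A a"
  then obtain c where "c \<in> A" "y = c * a" unfolding principal_ideal_def by blast
  then have "y = (c * d) * b" "c * d \<in> A" using d by (simp_all add: mult.assoc subring_mult[OF A])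
  then show "y \<in> principal_ideal A b" unfolding principal_ideal_def by blast
qed

lemma principal_ideal_self: "subring A \<Longrightarrow> a \<in> principal_ideal A a"
  unfolding principal_ideal_def using subring_1 by fastforce

lemma span_singleton:
  assumes A: "subring A"
  shows "span A {a} = principal_ideal A a"
proof
  show "span A {a} \<subseteq> principal_ideal A a"
  proof
    fix y assume "y \<in> span A {a}"
    then obtain F c where "F \<subseteq> {a}" "\<forall>x\<in>F. c x \<in> A" "y = (\<Sum>x\<in>F. c x * x)"
      unfolding span_def by blast
    then have "F = {} \<and> y = 0 * a \<or> F = {a} \<and> y = c a * a \<and> c a \<in> A"
      by (auto simp: subset_singleton_iff)
    then show "y \<in> principal_ideal A a"
      unfolding principal_ideal_def using subring_0[OF A] by blast
  qed
  show "principal_ideal A a \<subseteq> span A {a}"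
  proof
    fix y assume "y \<in> principal_ideal A a"
    then obtain c where "c \<in> A" "y = c * a" unfolding principal_ideal_def by blast
    then show "y \<in> span A {a}"
      unfolding span_def by (intro CollectI exI[of _ "{a}"] exI[of _ "\<lambda>_. c"]) simp
  qed
qed

lemma span_subset_principal_ideal:
  assumes A: "subring A" and "F \<subseteq> principal_ideal A a"
  shows "span A F \<subseteq> principal_ideal A a"
proof
  fix y assume "y \<in> span A F"
  then obtain G c where G: "finite G" "G \<subseteq> F" "\<forall>g\<in>G. c g \<in> A"
    and y: "y = (\<Sum>g\<in>G. c g * g)"
    unfolding span_def by blast
  have "\<forall>g\<in>G. \<exists>e. e \<in> A \<and> g = e * a"
    using G(2) assms(2) unfolding principal_ideal_def by blast
  then obtain e where e: "\<And>g. g \<in> G \<Longrightarrow> e g \<in> A \<and> g = e g * a"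
    by metis
  have "y = (\<Sum>g\<in>G. c g * e g * a)"
    unfolding y using e by (intro sum.cong) (auto simp: mult.assoc)
  also have "\<dots> = (\<Sum>g\<in>G. c g * e g) * a" by (simp add: sum_distrib_right)
  finally have "y = (\<Sum>g\<in>G. c g * e g) * a" .
  moreover have "(\<Sum>g\<in>G. c g * e g) \<in> A"
    using G e by (auto intro!: subring_sum[OF A] subring_mult[OF A])
  ultimately show "y \<in> principal_ideal A a" unfolding principal_ideal_def by blast
qed

lemma max_ideal_ideal: "max_ideal A I \<Longrightarrow> ideal_of A I"
  and max_ideal_proper: "max_ideal A I \<Longrightarrow> I \<noteq> A"
  and max_ideal_maximal:
    "max_ideal A I \<Longrightarrow> ideal_of A J \<Longrightarrow> I \<subseteq> J \<Longrightarrow> J \<noteq> A \<Longrightarrow> J = I"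
  unfolding max_ideal_def by blast+

lemma proper_ideal_subset_max_ideal:
  assumes A: "subring A" and I: "ideal_of A I" "1 \<notin> I"
  obtains M where "max_ideal A M" "I \<subseteq> M"
proof -
  define \<F> where "\<F> = {J. ideal_of A J \<and> I \<subseteq> J \<and> 1 \<notin> J}"
  have "\<exists>M\<in>\<F>. \<forall>J\<in>\<F>. M \<subseteq> J \<longrightarrow> J = M"
  proof (rule subset_Zorn_nonempty)
    show "\<F> \<noteq> {}" using I unfolding \<F>_def by blast
    fix \<C> assume \<C>: "\<C> \<noteq> {}" "subset.chain \<F> \<C>"
    then have \<C>\<F>: "\<And>X. X \<in> \<C> \<Longrightarrow> ideal_of A X \<and> I \<subseteq> X \<and> 1 \<notin> X"
      and chain: "\<And>X Y. X \<in> \<C> \<Longrightarrow> Y \<in> \<C> \<Longrightarrow> X \<subseteq> Y \<or> Y \<subseteq> X"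
      unfolding subset_chain_def \<F>_def by blast+
    have "ideal_of A (\<Union>\<C>)"
      unfolding ideal_of_def
    proof (intro conjI ballI)
      show "\<Union>\<C> \<subseteq> A" using \<C>\<F> ideal_of_subset by blast
      show "0 \<in> \<Union>\<C>" using \<C>(1) \<C>\<F> ideal_of_0 by blast
      fix y z assume "y \<in> \<Union>\<C>" "z \<in> \<Union>\<C>"
      then obtain X Z where XZ: "X \<in> \<C>" "Z \<in> \<C>" "y \<in> X" "z \<in> Z" by blast
      have "X \<union> Z = X \<or> X \<union> Z = Z" using chain[OF XZ(1,2)] by blast
      then have "X \<union> Z \<in> \<C>" using XZ(1,2) by metis
      moreover have "y + z \<in> X \<union> Z"
        using ideal_of_add \<C>\<F>[OF \<open>X \<union> Z \<in> \<C>\<close>] XZ(3,4) by blast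
      ultimately show "y + z \<in> \<Union>\<C>" by blast
    next
      fix a y assume "a \<in> A" "y \<in> \<Union>\<C>"
      then obtain X where "X \<in> \<C>" "y \<in> X" by blast
      then show "a * y \<in> \<Union>\<C>" using ideal_of_mult \<C>\<F> \<open>a \<in> A\<close> by blast
    qed
    moreover have "I \<subseteq> \<Union>\<C>" "1 \<notin> \<Union>\<C>" using \<C>(1) \<C>\<F> by blast+
    ultimately show "\<Union>\<C> \<in> \<F>" unfolding \<F>_def by blast
  qed
  then obtain M where "M \<in> \<F>" and M_max: "\<And>J. J \<in> \<F> \<Longrightarrow> M \<subseteq> J \<Longrightarrow> J = M"
    by blast
  then have M: "ideal_of A M" "I \<subseteq> M" "1 \<notin> M" unfolding \<F>_def by simp_all
  have "M \<noteq> A" using M(3) subring_1[OF A] by blast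
  then have "max_ideal A M"
    unfolding max_ideal_def using M M_max ideal_of_eq_if_1 unfolding \<F>_def by blast
  then show thesis using that M(2) by blast
qed

lemma local_ring_subring: "local_ring A \<Longrightarrow> subring A"
  unfolding local_ring_def by simp

lemma local_ring_max_ideal: "local_ring A \<Longrightarrow> max_ideal A (maxideal A)"
  unfolding local_ring_def maxideal_def by (metis theI')

lemma local_ring_maxideal_unique: "local_ring A \<Longrightarrow> max_ideal A I \<Longrightarrow> I = maxideal A"
  using local_ring_max_ideal unfolding local_ring_def by metis

lemma local_ring_maxideal_eq_nonunits:
  assumes "local_ring A"
  shows "maxideal A = {y \<in> A. \<not> unit_in A y}"
proof
  have M: "ideal_of A (maxideal A)" "maxideal A \<noteq> A"
    using local_ring_max_ideal[OF assms] max_ideal_ideal max_ideal_proper by blast+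
  show "maxideal A \<subseteq> {y \<in> A. \<not> unit_in A y}"
    using ideal_of_nonunit[OF M] ideal_of_subset[OF M(1)] by blast
next
  have A: "subring A" using assms by (rule local_ring_subring)
  show "{y \<in> A. \<not> unit_in A y} \<subseteq> maxideal A"
  proof clarify
    fix y assume y: "y \<in> A" "\<not> unit_in A y"
    have "1 \<notin> principal_ideal A y"
    proof
      assume "1 \<in> principal_ideal A y"
      then obtain c where "c \<in> A" "c * y = 1" unfolding principal_ideal_def by auto
      then show False using unit_in_if_mult_eq_1 y by blast
    qed
    then obtain M where "max_ideal A M" "principal_ideal A y \<subseteq> M"
      using proper_ideal_subset_max_ideal[OF A ideal_of_principal_ideal[OF A y(1)]] by blast
    then show "y \<in> maxideal A"
      using local_ring_maxideal_unique[OF assms] principal_ideal_self[OF A, of y] by blast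
  qed
qed

lemma local_ringI_nonunits:
  assumes A: "subring A" and N: "ideal_of A {y \<in> A. \<not> unit_in A y}"
  shows "local_ring A" "maxideal A = {y \<in> A. \<not> unit_in A y}"
proof -
  let ?N = "{y \<in> A. \<not> unit_in A y}"
  have proper_in_N: "J \<subseteq> ?N" if "ideal_of A J" "J \<noteq> A" for J
    using ideal_of_nonunit[OF that] ideal_of_subset[OF that(1)] by blast
  have "1 \<notin> ?N" using unit_in_1[OF A] by blast
  then have "?N \<noteq> A" using subring_1[OF A] by blast
  then have max: "max_ideal A ?N"
    unfolding max_ideal_def using N proper_in_N by blast
  have "M = ?N" if M: "max_ideal A M" for M
  proof -
    have "M \<subseteq> ?N" using proper_in_N max_ideal_ideal[OF M] max_ideal_proper[OF M] by blast
    then show ?thesis using max_ideal_maximal[OF M N] \<open>?N \<noteq> A\<close> by blast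
  qed
  then show "local_ring A" unfolding local_ring_def using A max by blast
  then show "maxideal A = ?N" using local_ring_maxideal_unique max by blast
qed

section \<open>Discrete valuation rings from a principal maximal ideal\<close>

lemma frac_closed:
  assumes A: "subring A"
  shows frac_of_mem: "a \<in> A \<Longrightarrow> a \<in> frac A"
    and frac_mult: "y \<in> frac A \<Longrightarrow> z \<in> frac A \<Longrightarrow> y * z \<in> frac A"
    and frac_inverse: "y \<in> frac A \<Longrightarrow> inverse y \<in> frac A"
proof -
  show "a \<in> A \<Longrightarrow> a \<in> frac A"
    unfolding frac_def using subring_1[OF A] by force
  show "y * z \<in> frac A" if yz: "y \<in> frac A" "z \<in> frac A"
  proof -
    obtain a b c d where "a \<in> A" "b \<in> A" "b \<noteq> 0" "c \<in> A" "d \<in> A" "d \<noteq> 0"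
      "y = a / b" "z = c / d"
      using yz unfolding frac_def by blast
    then show ?thesis
      unfolding frac_def by (intro CollectI exI[of _ "a * c"] exI[of _ "b * d"]) (simp add: subring_mult[OF A])
  qed
  show "inverse y \<in> frac A" if y: "y \<in> frac A"
  proof -
    obtain a b where "a \<in> A" "b \<in> A" "b \<noteq> 0" "y = a / b"
      using y unfolding frac_def by blast
    then show ?thesis
      unfolding frac_def using subring_0[OF A] subring_1[OF A]
      by (cases "a = 0") (force, intro CollectI exI[of _ b] exI[of _ a], simp)
  qed
qed

locale uniformizer =
  fixes A :: "'a::field set" and z :: 'a
  assumes subring: "subring A" and z_in: "z \<in> A" and z_nonzero: "z \<noteq> 0"
    and z_nonunit: "\<not> unit_in A z"
    and nonunit_divisible: "\<And>y. y \<in> A \<Longrightarrow> \<not> unit_in A y \<Longrightarrow> y \<in> principal_ideal A z"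
    and not_divisible_by_all_powers:
      "\<And>y. y \<in> A \<Longrightarrow> y \<noteq> 0 \<Longrightarrow> \<exists>n. y \<notin> principal_ideal A (z ^ n)"
begin

lemma power_principal_ideal_antimono:
  assumes "m \<le> n"
  shows "principal_ideal A (z ^ n) \<subseteq> principal_ideal A (z ^ m)"
proof (rule principal_ideal_trans[OF subring])
  have "z ^ n = z ^ (n - m) * z ^ m" using assms by (simp flip: power_add)
  then show "z ^ n \<in> principal_ideal A (z ^ m)"
    unfolding principal_ideal_def using subring_power[OF subring z_in] by blast
qed

lemma power_times_unit_exists:
  assumes y: "y \<in> A" "y \<noteq> 0"
  obtains n u where "unit_in A u" "y = z ^ n * u"
proof -
  let ?P = "\<lambda>n. y \<in> principal_ideal A (z ^ n)"
  obtain N where "\<not> ?P N" using not_divisible_by_all_powers[OF y] by blast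
  then have "?P m \<Longrightarrow> m < N" for m
    using power_principal_ideal_antimono[of N m] by (meson not_le subsetD)
  then have fin: "finite {n. ?P n}" by (meson bounded_nat_set_is_finite mem_Collect_eq)
  have "?P 0" unfolding principal_ideal_def using y by force
  define n where "n = Max {n. ?P n}"
  have "?P n" unfolding n_def using fin \<open>?P 0\<close> by (metis (mono_tags) Max_in empty_iff mem_Collect_eq)
  have "\<not> ?P (Suc n)" using fin n_def by (metis Max_ge Suc_n_not_le_n mem_Collect_eq)
  obtain u where u: "u \<in> A" "y = u * z ^ n" using \<open>?P n\<close> unfolding principal_ideal_def by blast
  have "unit_in A u"
  proof (rule ccontr)
    assume "\<not> unit_in A u"
    then obtain c where "c \<in> A" "u = c * z" using nonunit_divisible u(1) unfolding principal_ideal_def by blast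
    then have "y = c * z ^ Suc n" using u(2) by (simp add: mult.assoc)
    then show False using \<open>\<not> ?P (Suc n)\<close> \<open>c \<in> A\<close> unfolding principal_ideal_def by blast
  qed
  moreover have "y = z ^ n * u" using u(2) by (simp add: mult.commute)
  ultimately show thesis by (rule that)
qed

lemma power_times_unit_unique:
  assumes "unit_in A u" "unit_in A w" "z ^ n * u = z ^ m * w"
  shows "n = m"
proof -
  have "n \<le> m" if "unit_in A u" "unit_in A w" "z ^ n * u = z ^ m * w" for n m u w
  proof (rule ccontr)
    assume "\<not> n \<le> m"
    then have "z ^ n = z ^ m * z ^ (n - m)" by (simp flip: power_add)
    then have "u * z ^ (n - m) = w" using that(3) z_nonzero by (simp add: mult.commute mult.left_commute)
    moreover obtain k where "n - m = Suc k" using \<open>\<not> n \<le> m\<close> by (metis Suc_diff_Suc not_le)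
    ultimately have "(inverse w * u * z ^ k) * z = 1"
      using that(2) by (simp add: unit_in_def field_simps)
    moreover have "inverse w * u * z ^ k \<in> A"
      using that unfolding unit_in_def by (simp add: subring_mult[OF subring] subring_power[OF subring z_in])
    ultimately show False using unit_in_if_mult_eq_1 z_in z_nonunit by blast
  qed
  then show ?thesis using assms by (metis le_antisym)
qed

lemma frac_power_int_times_unit_exists:
  assumes "y \<in> frac A" "y \<noteq> 0"
  obtains k u where "unit_in A u" "y = z powi k * u"
proof -
  obtain a b where ab: "a \<in> A" "b \<in> A" "b \<noteq> 0" "y = a / b" using assms(1) frac_def by blast
  then have "a \<noteq> 0" using assms(2) by auto
  obtain n u where nu: "unit_in A u" "a = z ^ n * u" using power_times_unit_exists ab(1) \<open>a \<noteq> 0\<close> by blast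
  obtain m w where mw: "unit_in A w" "b = z ^ m * w" using power_times_unit_exists ab(2,3) by blast
  have "y = z powi (int n - int m) * (u * inverse w)"
    using ab nu mw z_nonzero by (simp add: power_int_diff field_simps)
  moreover have "unit_in A (u * inverse w)" using unit_in_mult[OF subring] unit_in_inverse nu mw by blast
  ultimately show thesis using that by blast
qed

lemma power_int_times_unit_unique:
  assumes "unit_in A u" "unit_in A w" "z powi k * u = z powi l * w"
  shows "k = l"
proof -
  have "k = l" if "unit_in A u" "unit_in A w" "z powi k * u = z powi l * w" "k \<le> l" for k l u w
  proof -
    have "z powi l = z powi k * z ^ nat (l - k)"
      using power_int_add[of z k "l - k"] z_nonzero \<open>k \<le> l\<close> by (simp add: power_int_nonneg_exp)
    then have "z ^ 0 * u = z ^ nat (l - k) * w" using that(3) z_nonzero by (simp add: mult.assoc)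
    then have "0 = nat (l - k)" by (rule power_times_unit_unique[OF that(1,2)])
    then show ?thesis using \<open>k \<le> l\<close> by simp
  qed
  then show ?thesis using assms by (metis linear)
qed

definition val :: "'a \<Rightarrow> int" where
  "val y = (THE k. \<exists>u. unit_in A u \<and> y = z powi k * u)"

lemma val_eq: "unit_in A u \<Longrightarrow> val (z powi k * u) = k"
  unfolding val_def by (rule the_equality) (auto dest: power_int_times_unit_unique)

lemma power_int_in_frac: "z powi k \<in> frac A"
proof (cases "k \<ge> 0")
  case True
  then show ?thesis
    using frac_of_mem[OF subring] subring_power[OF subring z_in] by (simp add: power_int_nonneg_exp)
next
  case False
  then have "z powi k = inverse (z ^ nat (- k))" by (simp add: power_int_def power_inverse)
  then show ?thesis
    using frac_inverse[OF subring] frac_of_mem[OF subring] subring_power[OF subring z_in] by simp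
qed

lemma val_mult:
  assumes "y \<in> frac A - {0}" "w \<in> frac A - {0}"
  shows "val (y * w) = val y + val w"
proof -
  obtain k u where ku: "unit_in A u" "y = z powi k * u"
    using frac_power_int_times_unit_exists assms(1) by blast
  obtain l u' where lu: "unit_in A u'" "w = z powi l * u'"
    using frac_power_int_times_unit_exists assms(2) by blast
  have "y * w = z powi (k + l) * (u * u')" using ku lu z_nonzero by (simp add: power_int_add field_simps)
  then have "val (y * w) = k + l" using val_eq unit_in_mult[OF subring ku(1) lu(1)] by presburger
  moreover have "val y = k" "val w = l" using val_eq ku lu by simp_all
  ultimately show ?thesis by simp
qed

lemma val_add_ge_min:
  assumes "y \<in> frac A - {0}" "w \<in> frac A - {0}" "y + w \<noteq> 0"
  shows "val (y + w) \<ge> min (val y) (val w)"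
proof -
  have *: "val (y + w) \<ge> val y"
    if "unit_in A u" "y = z powi k * u" "unit_in A u'" "w = z powi l * u'" "k \<le> l" "y + w \<noteq> 0"
    for y w k l u u'
  proof -
    define c where "c = u + z ^ nat (l - k) * u'"
    have "z powi l = z powi k * z ^ nat (l - k)"
      using power_int_add[of z k "l - k"] z_nonzero \<open>k \<le> l\<close> by (simp add: power_int_nonneg_exp)
    then have sum: "y + w = z powi k * c" using that c_def by (simp add: field_simps)
    have "c \<in> A" using c_def that subring z_in unfolding unit_in_def
      by (auto intro!: subring_add subring_mult subring_power)
    moreover have "c \<noteq> 0" using sum that by auto
    ultimately obtain n v where "unit_in A v" "c = z ^ n * v" using power_times_unit_exists by blast
    then have "y + w = z powi (k + int n) * v" using sum z_nonzero by (simp add: power_int_add mult.assoc)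
    then have "val (y + w) = k + int n" using val_eq \<open>unit_in A v\<close> by presburger
    then show ?thesis using val_eq that(1,2) by simp
  qed
  obtain k u where "unit_in A u" "y = z powi k * u"
    using frac_power_int_times_unit_exists assms(1) by blast
  moreover obtain l u' where "unit_in A u'" "w = z powi l * u'"
    using frac_power_int_times_unit_exists assms(2) by blast
  ultimately show ?thesis
    using *[of u y k u' w l] *[of u' w l u y k] assms(3) by (cases "k \<le> l") (auto simp: add.commute)
qed

lemma val_surj: "val ` (frac A - {0}) = UNIV"
proof -
  have "k = val (z powi k) \<and> z powi k \<in> frac A - {0}" for k
    using val_eq[OF unit_in_1[OF subring], of k] power_int_in_frac z_nonzero by simp
  then show ?thesis by blast
qed

lemma eq_val_nonneg: "A = insert 0 {y \<in> frac A - {0}. val y \<ge> 0}"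
proof (intro equalityI subsetI)
  fix y assume y: "y \<in> A"
  show "y \<in> insert 0 {y \<in> frac A - {0}. val y \<ge> 0}"
  proof (cases "y = 0")
    case False
    then obtain n u where "unit_in A u" "y = z ^ n * u" using power_times_unit_exists y by blast
    then have "val y = int n" using val_eq by (metis power_int_of_nat)
    then show ?thesis using frac_of_mem[OF subring y] False by simp
  qed simp
next
  fix y assume y: "y \<in> insert 0 {y \<in> frac A - {0}. val y \<ge> 0}"
  show "y \<in> A"
  proof (cases "y = 0")
    case True then show ?thesis using subring_0[OF subring] by simp
  next
    case False
    then obtain k u where ku: "unit_in A u" "y = z powi k * u"
      using frac_power_int_times_unit_exists y by blast
    then have "k \<ge> 0" using y False val_eq by auto
    then have "y = z ^ nat k * u" using ku by (simp add: power_int_nonneg_exp)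
    then show ?thesis using ku unfolding unit_in_def
      by (auto intro!: subring_mult[OF subring] subring_power[OF subring z_in])
  qed
qed

theorem DVR: "DVR A"
  unfolding DVR_def
  using subring val_mult val_add_ge_min val_surj eq_val_nonneg by blast

end

lemma DVR_if_principal_maxideal:
  assumes A: "local_ring A" and z: "z \<in> maxideal A" "z \<noteq> 0"
    and maxideal_principal: "maxideal A \<subseteq> principal_ideal A z"
    and not_divisible: "\<And>y. y \<in> A \<Longrightarrow> y \<noteq> 0 \<Longrightarrow> \<exists>n. y \<notin> principal_ideal A (z ^ n)"
  shows "DVR A"
proof -
  interpret uniformizer A z
    using local_ring_subring[OF A] z maxideal_principal not_divisible
    unfolding local_ring_maxideal_eq_nonunits[OF A] by unfold_locales auto
  show ?thesis by (rule DVR)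
qed

section \<open>Discrete valuation rings are Noetherian\<close>

locale discrete_valuation =
  fixes D :: "'a::field set" and v :: "'a \<Rightarrow> int"
  assumes subring: "subring D"
    and val_mult: "\<And>x y. x \<in> frac D - {0} \<Longrightarrow> y \<in> frac D - {0} \<Longrightarrow> v (x * y) = v x + v y"
    and eq_val_nonneg: "D = insert 0 {x \<in> frac D - {0}. v x \<ge> 0}"
begin

lemma val_1: "v 1 = 0"
  using val_mult[of 1 1] frac_of_mem[OF subring subring_1[OF subring]] by simp

lemma val_nonneg: "y \<in> D \<Longrightarrow> y \<noteq> 0 \<Longrightarrow> v y \<ge> 0"
  using eq_val_nonneg by blast

lemma mem_if_val_nonneg: "y \<in> frac D \<Longrightarrow> y \<noteq> 0 \<Longrightarrow> v y \<ge> 0 \<Longrightarrow> y \<in> D"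
  by (subst eq_val_nonneg) simp

lemma val_mult_mem: "y \<in> D \<Longrightarrow> w \<in> D \<Longrightarrow> y \<noteq> 0 \<Longrightarrow> w \<noteq> 0 \<Longrightarrow> v (y * w) = v y + v w"
  using val_mult frac_of_mem[OF subring] by blast

lemma val_inverse: "y \<in> frac D \<Longrightarrow> y \<noteq> 0 \<Longrightarrow> v (inverse y) = - v y"
  using val_mult[of y "inverse y"] frac_inverse[OF subring] val_1 by simp

lemma unit_in_iff_val_0:
  assumes "y \<in> D" "y \<noteq> 0"
  shows "unit_in D y \<longleftrightarrow> v y = 0"
proof -
  have y: "y \<in> frac D" "inverse y \<in> frac D"
    using frac_of_mem[OF subring assms(1)] frac_inverse[OF subring] by auto
  have "inverse y \<in> D \<longleftrightarrow> v y \<le> 0"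
    using val_nonneg[of "inverse y"] mem_if_val_nonneg[OF y(2)] val_inverse[OF y(1)] assms(2) by auto
  then show ?thesis using val_nonneg[OF assms] assms unfolding unit_in_def by auto
qed

lemma val_power_mult_ge:
  assumes "y \<in> D" "s \<in> D" "y \<noteq> 0" "s \<noteq> 0"
  shows "v (y ^ n * s) \<ge> int n * v y"
proof (induction n)
  case 0
  then show ?case using val_nonneg assms by simp
next
  case (Suc n)
  have "y ^ n * s \<in> D" using assms subring_mult[OF subring] subring_power[OF subring] by blast
  then have "v (y * (y ^ n * s)) = v y + v (y ^ n * s)"
    using val_mult_mem assms by simp
  then show ?case using Suc by (simp add: algebra_simps)
qed

lemma ideal_principal:
  assumes I: "ideal_of D I"
  obtains a where "I = principal_ideal D a"
proof (cases "I \<subseteq> {0}")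
  case True
  then have "I = principal_ideal D 0"
    using ideal_of_0[OF I] subring_0[OF subring] unfolding principal_ideal_def by auto
  then show thesis using that by blast
next
  case False
  then obtain b where "b \<in> I" "b \<noteq> 0" by blast
  then obtain a where a: "a \<in> I" "a \<noteq> 0"
    and a_min: "\<And>b. b \<in> I \<Longrightarrow> b \<noteq> 0 \<Longrightarrow> nat (v a) \<le> nat (v b)"
    using ex_has_least_nat[of "\<lambda>b. b \<in> I \<and> b \<noteq> 0" b "\<lambda>b. nat (v b)"] by blast
  have aD: "a \<in> D" using a(1) ideal_of_subset[OF I] by blast
  have "I \<subseteq> principal_ideal D a"
  proof
    fix b assume b: "b \<in> I"
    have bD: "b \<in> D" using b ideal_of_subset[OF I] by blast
    show "b \<in> principal_ideal D a"
    proof (cases "b = 0")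
      case True
      then show ?thesis using subring_0[OF subring] unfolding principal_ideal_def by force
    next
      case False
      have ba: "b / a \<in> frac D" "b / a \<noteq> 0"
        using frac_mult[OF subring frac_of_mem[OF subring bD] frac_inverse[OF subring frac_of_mem[OF subring aD]]]
          False a(2) by (simp_all add: divide_inverse)
      have "v b = v (b / a * a)" using a(2) by simp
      also have "\<dots> = v (b / a) + v a"
        using val_mult ba frac_of_mem[OF subring aD] a(2) by blast
      finally have "v (b / a) \<ge> 0"
        using a_min[OF b False] val_nonneg[OF aD a(2)] val_nonneg[OF bD False] by linarith
      then have "b / a \<in> D" using mem_if_val_nonneg ba by blast
      moreover have "b = b / a * a" using a(2) by simp
      ultimately show ?thesis unfolding principal_ideal_def by blast
    qed
  qed
  moreover have "principal_ideal D a \<subseteq> I"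
    using ideal_of_mult[OF I _ a(1)] unfolding principal_ideal_def by blast
  ultimately show thesis using that by blast
qed

lemma noetherian: "noetherian D"
  unfolding noetherian_def
proof (intro conjI allI impI)
  fix I assume I: "ideal_of D I"
  then obtain a where a: "I = principal_ideal D a" by (rule ideal_principal)
  then have "a \<in> I" using principal_ideal_self[OF subring] by blast
  then show "\<exists>F. finite F \<and> F \<subseteq> I \<and> I = span D F"
    using a span_singleton[OF subring] by (intro exI[of _ "{a}"]) simp
qed (rule subring)

end

lemma DVR_imp_discrete_valuation: "DVR D \<Longrightarrow> \<exists>v. discrete_valuation D v"
  unfolding DVR_def discrete_valuation_def by (elim conjE exE) metis

lemma DVR_imp_noetherian: "DVR D \<Longrightarrow> noetherian D"
  using DVR_imp_discrete_valuation discrete_valuation.noetherian by blast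

lemma noetherian_ascending_principal_chain_stabilizes:
  assumes A: "noetherian A"
    and a_mem: "\<And>n. a n \<in> A" and a_chain: "\<And>n. a n \<in> principal_ideal A (a (Suc n))"
  obtains M where "a (Suc M) \<in> principal_ideal A (a M)"
proof -
  have subring: "subring A" using A unfolding noetherian_def by blast
  let ?P = "\<lambda>n. principal_ideal A (a n)"
  have "incseq ?P"
    using principal_ideal_trans[OF subring a_chain] by (intro incseq_SucI) blast
  moreover have "ideal_of A (?P n)" for n using ideal_of_principal_ideal[OF subring a_mem] .
  ultimately have "ideal_of A (\<Union>n. ?P n)" by (rule ideal_of_Union_incseq)
  then obtain G where G: "finite G" "G \<subseteq> (\<Union>n. ?P n)" "(\<Union>n. ?P n) = span A G"
    using A unfolding noetherian_def by blast
  obtain M where "G \<subseteq> ?P M" using finite_subset_incseq_Union[OF \<open>incseq ?P\<close> G(1,2)] .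
  then have "(\<Union>n. ?P n) \<subseteq> ?P M" using G(3) span_subset_principal_ideal[OF subring] by simp
  then have "a (Suc M) \<in> ?P M" using principal_ideal_self[OF subring] by blast
  then show thesis by (rule that)
qed

text \<open>A weak form of Krull's intersection theorem: in a Noetherian domain no nonzero element is
  divisible by every power of a nonunit, for otherwise the quotients by these powers would
  generate a strictly ascending chain of principal ideals.\<close>
lemma noetherian_not_divisible_by_all_powers:
  assumes A: "noetherian A" and z: "z \<in> A" "z \<noteq> 0" "\<not> unit_in A z" and y: "y \<in> A" "y \<noteq> 0"
  shows "\<exists>n. y \<notin> principal_ideal A (z ^ n)"
proof (rule ccontr)
  have subring: "subring A" using A unfolding noetherian_def by blast
  assume "\<not> ?thesis"
  then have "\<forall>n. \<exists>c\<in>A. y = c * z ^ n" unfolding principal_ideal_def by blast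
  define a where "a n = y / z ^ n" for n
  have a_mem: "a n \<in> A" for n
  proof -
    obtain c where "c \<in> A" "y = c * z ^ n" using \<open>\<forall>n. \<exists>c\<in>A. y = c * z ^ n\<close> by blast
    then show ?thesis using z(2) unfolding a_def by simp
  qed
  have a_step: "a n = z * a (Suc n)" for n
    using z(2) unfolding a_def by (simp add: field_simps)
  have "a n \<in> principal_ideal A (a (Suc n))" for n
    unfolding principal_ideal_def using z(1) a_step[of n] by (auto simp only: mult.commute)
  then obtain M where "a (Suc M) \<in> principal_ideal A (a M)"
    using noetherian_ascending_principal_chain_stabilizes[OF A a_mem] by blast
  then obtain c where "c \<in> A" "a (Suc M) = c * a M"
    unfolding principal_ideal_def by blast
  then have "a (Suc M) * 1 = a (Suc M) * (c * z)"
    using a_step[of M] by (simp add: ac_simps)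
  moreover have "a (Suc M) \<noteq> 0" using y(2) z(2) unfolding a_def by simp
  ultimately have "c * z = 1" using mult_left_cancel by metis
  then show False using unit_in_if_mult_eq_1 \<open>c \<in> A\<close> z(1,3) by blast
qed

section \<open>Chains of local quadratic transforms\<close>

lemma decreasing_nonneg_int_eventually_const:
  fixes f :: "nat \<Rightarrow> int"
  assumes "\<And>i. f (Suc i) \<le> f i" "\<And>i. f i \<ge> 0"
  obtains N where "\<And>j. N \<le> j \<Longrightarrow> f j = f N"
proof -
  obtain N where N: "\<And>i. nat (f N) \<le> nat (f i)"
    using ex_has_least_nat[of "\<lambda>_. True" 0 "\<lambda>i. nat (f i)"] by blast
  have "f j = f N" if "N \<le> j" for j
    using decseqD[OF decseq_SucI[of f, OF assms(1)] that] N[of j] assms(2)[of j] by linarith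
  then show thesis by (rule that)
qed

lemma local_quadratic_transform_generator:
  assumes "local_quadratic_transform A T"
  shows "\<exists>x. x \<in> maxideal A \<and> x \<noteq> 0 \<and> (\<forall>y\<in>maxideal A. y / x \<in> T \<and> \<not> unit_in T y)"
proof -
  obtain x q where x: "x \<in> maxideal A"
    "x \<notin> span A {y * z | y z. y \<in> maxideal A \<and> z \<in> maxideal A}"
    and q: "prime_ideal (ring_adj A ((\<lambda>y. y / x) ` maxideal A)) q" "maxideal A \<subseteq> q"
    and T: "T = localize (ring_adj A ((\<lambda>y. y / x) ` maxideal A)) q"
    using assms unfolding local_quadratic_transform_def by blast
  define B where "B = ring_adj A ((\<lambda>y. y / x) ` maxideal A)"
  have "0 \<in> span A X" for X
    unfolding span_def by (intro CollectI exI[of _ "{}"]) simp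
  then have "x \<noteq> 0" using x(2) by blast
  have q_ideal: "ideal_of B q" and "1 \<notin> q"
    using q(1) ideal_of_eq_if_1 unfolding B_def prime_ideal_def by blast+
  have B_T: "b \<in> T" if "b \<in> B" for b
  proof -
    have "1 \<in> B" unfolding B_def ring_adj_def subring_def by blast
    moreover have "b = b / 1" by simp
    ultimately show ?thesis using that \<open>1 \<notin> q\<close> unfolding T localize_def B_def by blast
  qed
  have "y / x \<in> T" if "y \<in> maxideal A" for y
    using B_T that unfolding B_def ring_adj_def by blast
  moreover have "\<not> unit_in T y" if y: "y \<in> maxideal A" for y
  proof
    assume "unit_in T y"
    then have "y \<noteq> 0" "inverse y \<in> T" unfolding unit_in_def by auto
    then obtain b c where bc: "b \<in> B" "c \<in> B" "c \<notin> q" "inverse y = b / c"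
      unfolding T localize_def B_def by blast
    have "c \<noteq> 0" using bc(3) ideal_of_0[OF q_ideal] by blast
    then have "c = b * y" using bc(4) \<open>y \<noteq> 0\<close> by (simp add: field_simps)
    moreover have "y \<in> q" using y q(2) by blast
    ultimately show False using ideal_of_mult[OF q_ideal bc(1)] bc(3) by simp
  qed
  ultimately show ?thesis using x(1) \<open>x \<noteq> 0\<close> by blast
qed

text \<open>The features of a chain of local quadratic transforms \<open>R\<^sub>i\<^sub>+\<^sub>1 = R\<^sub>i[m\<^sub>i/x\<^sub>i]\<^sub>q\<close>
  that the argument uses: each step dominates the previous one, and \<open>m\<^sub>i \<subseteq> x\<^sub>i R\<^sub>i\<^sub>+\<^sub>1\<close>.\<close>
locale principal_local_chain =
  fixes R :: "nat \<Rightarrow> 'a::field set" and x :: "nat \<Rightarrow> 'a" and S :: "'a set"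
  assumes local_R: "local_ring (R i)"
    and R_Suc: "R i \<subseteq> R (Suc i)"
    and x_maxideal: "x i \<in> maxideal (R i)" and x_nonzero: "x i \<noteq> 0"
    and maxideal_div_x: "y \<in> maxideal (R i) \<Longrightarrow> y / x i \<in> R (Suc i)"
    and maxideal_nonunit_Suc: "y \<in> maxideal (R i) \<Longrightarrow> \<not> unit_in (R (Suc i)) y"
    and S_eq: "S = (\<Union>i. R i)"
begin

lemma incseq_R: "incseq R"
  using R_Suc by (rule incseq_SucI)

lemma R_subset_S: "R i \<subseteq> S"
  using S_eq by blast

lemma subring_R: "subring (R i)"
  using local_R by (rule local_ring_subring)

lemma unit_in_R_Suc_iff: "y \<in> R i \<Longrightarrow> unit_in (R (Suc i)) y \<longleftrightarrow> unit_in (R i) y"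
  using maxideal_nonunit_Suc local_ring_maxideal_eq_nonunits[OF local_R] unit_in_mono[OF R_Suc]
  by blast

lemma unit_in_R_iff: "i \<le> j \<Longrightarrow> y \<in> R i \<Longrightarrow> unit_in (R j) y \<longleftrightarrow> unit_in (R i) y"
proof (induction j rule: dec_induct)
  case (step j)
  then show ?case using unit_in_R_Suc_iff incseqD[OF incseq_R] by blast
qed simp

lemma unit_in_S_iff:
  assumes "y \<in> R i"
  shows "unit_in S y \<longleftrightarrow> unit_in (R i) y"
proof
  assume "unit_in S y"
  then obtain k where "inverse y \<in> R k" "y \<noteq> 0" unfolding unit_in_def S_eq by blast
  then have "unit_in (R (max i k)) y"
    using incseqD[OF incseq_R, of k "max i k"] incseqD[OF incseq_R, of i "max i k"] assms
    unfolding unit_in_def by auto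
  then show "unit_in (R i) y" using unit_in_R_iff[of i "max i k"] assms by simp
qed (rule unit_in_mono[OF R_subset_S])

lemma nonunits_S_Int_R: "{y \<in> S. \<not> unit_in S y} \<inter> R i = maxideal (R i)"
  using unit_in_S_iff R_subset_S local_ring_maxideal_eq_nonunits[OF local_R] by blast

lemma common_R:
  assumes "y \<in> S" "w \<in> S"
  obtains m where "y \<in> R m" "w \<in> R m"
proof -
  obtain i j where "y \<in> R i" "w \<in> R j" using assms S_eq by blast
  then show thesis
    using that incseqD[OF incseq_R, of i "max i j"] incseqD[OF incseq_R, of j "max i j"] by auto
qed

lemma subring_S: "subring S"
  unfolding subring_def
proof (intro conjI ballI)
  show "0 \<in> S" "1 \<in> S" using R_subset_S subring_0[OF subring_R] subring_1[OF subring_R] by blast+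
  fix y w assume "y \<in> S" "w \<in> S"
  then obtain m where "y \<in> R m" "w \<in> R m" by (rule common_R)
  then have "y + w \<in> R m" "y * w \<in> R m" "- y \<in> R m"
    by (simp_all add: subring_add[OF subring_R] subring_mult[OF subring_R] subring_uminus[OF subring_R])
  then show "y + w \<in> S" "y * w \<in> S" "- y \<in> S" using R_subset_S by blast+
qed

lemma ideal_of_nonunits_S: "ideal_of S {y \<in> S. \<not> unit_in S y}"
proof -
  let ?N = "{y \<in> S. \<not> unit_in S y}"
  have M: "ideal_of (R m) (maxideal (R m))" for m
    using local_ring_max_ideal[OF local_R] by (rule max_ideal_ideal)
  have in_common_maxideal: "\<exists>m. a \<in> R m \<and> y \<in> maxideal (R m)" if "a \<in> S" "y \<in> ?N" for a y
    using common_R[of a y] that nonunits_S_Int_R by blast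
  show ?thesis
    unfolding ideal_of_def
  proof (intro conjI ballI)
    show "?N \<subseteq> S" by blast
    show "0 \<in> ?N" using subring_0[OF subring_S] unfolding unit_in_def by blast
    fix y w assume "y \<in> ?N" "w \<in> ?N"
    then obtain m where "y \<in> maxideal (R m)" "w \<in> maxideal (R m)"
      using in_common_maxideal[of y w] nonunits_S_Int_R by blast
    then have "y + w \<in> maxideal (R m)" using ideal_of_add[OF M] by blast
    then show "y + w \<in> ?N" using nonunits_S_Int_R by blast
  next
    fix a y assume "a \<in> S" "y \<in> ?N"
    then obtain m where "a \<in> R m" "y \<in> maxideal (R m)" using in_common_maxideal by blast
    then have "a * y \<in> maxideal (R m)" using ideal_of_mult[OF M] by blast
    then show "a * y \<in> ?N" using nonunits_S_Int_R by blast
  qed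
qed

lemma local_S: "local_ring S"
  and maxideal_S: "maxideal S = {y \<in> S. \<not> unit_in S y}"
  using local_ringI_nonunits[OF subring_S ideal_of_nonunits_S] by blast+

lemma maxideal_S_Int_R: "maxideal S \<inter> R i = maxideal (R i)"
  using maxideal_S nonunits_S_Int_R by simp

lemma x_maxideal_S: "x i \<in> maxideal S"
  using maxideal_S_Int_R x_maxideal by blast

lemma x_in_S: "x i \<in> S" and x_nonunit_S: "\<not> unit_in S (x i)"
  using x_maxideal_S[of i] unfolding maxideal_S by simp_all

lemma maxideal_S_divisible:
  assumes "y \<in> maxideal S" "y \<in> R j"
  shows "y \<in> principal_ideal S (x j)"
proof -
  have "y / x j \<in> S" using maxideal_div_x maxideal_S_Int_R assms R_subset_S by blast
  moreover have "y = y / x j * x j" using x_nonzero by simp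
  ultimately show ?thesis unfolding principal_ideal_def by blast
qed

theorem DVR_if_noetherian:
  assumes "noetherian S"
  shows "DVR S"
proof -
  have "ideal_of S (maxideal S)"
    using local_ring_max_ideal[OF local_S] by (rule max_ideal_ideal)
  then obtain F where F: "finite F" "F \<subseteq> maxideal S" "maxideal S = span S F"
    using assms unfolding noetherian_def by blast
  moreover have "F \<subseteq> (\<Union>i. R i)" using F(2) maxideal_S S_eq by blast
  ultimately obtain j where "F \<subseteq> R j" using finite_subset_incseq_Union[OF incseq_R] by blast
  then have "F \<subseteq> principal_ideal S (x j)" using maxideal_S_divisible F(2) by blast
  then have "maxideal S \<subseteq> principal_ideal S (x j)"
    using F(3) span_subset_principal_ideal[OF subring_S] by simp
  then show ?thesis
    using DVR_if_principal_maxideal[OF local_S x_maxideal_S x_nonzero]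
      noetherian_not_divisible_by_all_powers[OF assms x_in_S x_nonzero x_nonunit_S] by blast
qed

context
  fixes D :: "'a set" and v :: "'a \<Rightarrow> int"
  assumes val: "discrete_valuation D v" and dominates: "dominates D S"
begin

interpretation D: discrete_valuation D v by (rule val)

lemma S_subset_D: "S \<subseteq> D"
  using dominates unfolding dominates_def by blast

lemma unit_in_S_iff_val_0:
  assumes "y \<in> S" "y \<noteq> 0"
  shows "unit_in S y \<longleftrightarrow> v y = 0"
proof -
  have "local_ring D" and maxideal_D_Int: "maxideal D \<inter> S = maxideal S"
    using dominates unfolding dominates_def by blast+
  have "y \<in> D" using assms(1) S_subset_D by blast
  have "unit_in S y \<longleftrightarrow> y \<notin> maxideal S" using assms(1) by (simp add: maxideal_S)
  also have "\<dots> \<longleftrightarrow> y \<notin> maxideal D" using maxideal_D_Int assms(1) by blast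
  also have "\<dots> \<longleftrightarrow> unit_in D y"
    using \<open>y \<in> D\<close> by (simp add: local_ring_maxideal_eq_nonunits[OF \<open>local_ring D\<close>])
  also have "\<dots> \<longleftrightarrow> v y = 0" using D.unit_in_iff_val_0 \<open>y \<in> D\<close> assms(2) by blast
  finally show ?thesis .
qed

lemma val_nonneg_S: "y \<in> S \<Longrightarrow> y \<noteq> 0 \<Longrightarrow> v y \<ge> 0"
  using D.val_nonneg S_subset_D by blast

lemma val_x_pos: "v (x i) \<ge> 1"
proof -
  have "v (x i) \<noteq> 0" using unit_in_S_iff_val_0[OF x_in_S x_nonzero] x_nonunit_S by blast
  then show ?thesis using val_nonneg_S[OF x_in_S[of i] x_nonzero[of i]] by linarith
qed

lemma x_divisible_x_Suc:
  obtains c where "c \<in> S" "c \<noteq> 0" "x i = c * x (Suc i)" "v (x i) = v c + v (x (Suc i))"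
proof -
  have "x i \<in> R (Suc i)" using x_maxideal[of i] maxideal_S_Int_R[of i] R_Suc[of i] by blast
  then obtain c where c: "c \<in> S" "x i = c * x (Suc i)"
    using maxideal_S_divisible x_maxideal_S unfolding principal_ideal_def by blast
  have "c \<noteq> 0" using c(2) x_nonzero by auto
  have "v (x i) = v c + v (x (Suc i))"
    unfolding c(2) using D.val_mult_mem c(1) x_in_S S_subset_D \<open>c \<noteq> 0\<close> x_nonzero by blast
  then show thesis using that c \<open>c \<noteq> 0\<close> by blast
qed

lemma val_x_Suc_le: "v (x (Suc i)) \<le> v (x i)"
proof -
  obtain c where "c \<in> S" "c \<noteq> 0" "v (x i) = v c + v (x (Suc i))"
    using x_divisible_x_Suc by blast
  then show ?thesis using val_nonneg_S[of c] by linarith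
qed

lemma x_eventually_associated:
  obtains N where "\<And>j. N \<le> j \<Longrightarrow> x j \<in> principal_ideal S (x N)"
proof -
  have "0 \<le> v (x i)" for i using val_x_pos[of i] by linarith
  then obtain N where N: "\<And>j. N \<le> j \<Longrightarrow> v (x j) = v (x N)"
    using decreasing_nonneg_int_eventually_const[of "\<lambda>i. v (x i)", OF val_x_Suc_le] by blast
  have "x j \<in> principal_ideal S (x N)" if "N \<le> j" for j
    using that
  proof (induction j rule: dec_induct)
    case base
    show ?case by (rule principal_ideal_self[OF subring_S])
  next
    case (step j)
    obtain c where c: "c \<in> S" "c \<noteq> 0" "x j = c * x (Suc j)" "v (x j) = v c + v (x (Suc j))"
      using x_divisible_x_Suc by blast
    moreover have "v (x j) = v (x (Suc j))" using N[OF step(1)] N[OF le_SucI[OF step(1)]] by simp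
    ultimately have "unit_in S c" using unit_in_S_iff_val_0 by simp
    then have "x (Suc j) \<in> principal_ideal S (x j)"
      using c(2,3) unfolding principal_ideal_def unit_in_def by (intro CollectI exI[of _ "inverse c"]) simp
    then show ?case using principal_ideal_trans[OF subring_S] step(3) by blast
  qed
  then show thesis by (rule that)
qed

theorem DVR_if_dominated: "DVR S"
proof -
  obtain N where N: "\<And>j. N \<le> j \<Longrightarrow> x j \<in> principal_ideal S (x N)"
    using x_eventually_associated by blast
  have "maxideal S \<subseteq> principal_ideal S (x N)"
  proof
    fix y assume y: "y \<in> maxideal S"
    then have "y \<in> S" unfolding maxideal_S by simp
    then obtain m where "y \<in> R m" unfolding S_eq by blast
    then have "y \<in> R (max m N)" using incseqD[OF incseq_R max.cobounded1] by blast
    then have "y \<in> principal_ideal S (x (max m N))" using maxideal_S_divisible y by blast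
    then show "y \<in> principal_ideal S (x N)"
      using principal_ideal_trans[OF subring_S N[of "max m N"]] by auto
  qed
  moreover have "\<exists>n. y \<notin> principal_ideal S (x N ^ n)" if y: "y \<in> S" "y \<noteq> 0" for y
  proof
    let ?n = "nat (v y + 1)"
    show "y \<notin> principal_ideal S (x N ^ ?n)"
    proof
      assume "y \<in> principal_ideal S (x N ^ ?n)"
      then obtain c where c: "c \<in> S" "y = x N ^ ?n * c"
        unfolding principal_ideal_def by (auto simp: mult.commute)
      then have "c \<noteq> 0" using y(2) by auto
      then have "v (x N ^ ?n * c) \<ge> int ?n * v (x N)"
        using D.val_power_mult_ge x_in_S S_subset_D x_nonzero c(1) by blast
      then have "v y \<ge> int ?n * v (x N)" using c(2) by simp
      moreover have "int ?n * v (x N) \<ge> int ?n"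
        using mult_left_mono[OF val_x_pos[of N], of "int ?n"] by simp
      ultimately show False using val_nonneg_S[OF y] by linarith
    qed
  qed
  ultimately show ?thesis
    using DVR_if_principal_maxideal[OF local_S x_maxideal_S x_nonzero] by blast
qed

end

end

theorem corollary3p9:
  fixes R :: "nat \<Rightarrow> 'a::field set" and S :: "'a set"
  assumes "\<forall>i. regular_local (R i) \<and> krull_dim (R i) \<ge> 2"
    and "\<forall>i. local_quadratic_transform (R i) (R (Suc i))"
    and "\<forall>i. R i \<subset> R (Suc i)"
    and "S = (\<Union>i. R i)"
  shows "((\<exists>D. DVR D \<and> dominates D S) \<longleftrightarrow> DVR S) \<and> (DVR S \<longleftrightarrow> noetherian S)"
proof -
  have "\<forall>i. \<exists>t. t \<in> maxideal (R i) \<and> t \<noteq> 0 \<and>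
      (\<forall>y\<in>maxideal (R i). y / t \<in> R (Suc i) \<and> \<not> unit_in (R (Suc i)) y)"
    using local_quadratic_transform_generator assms(2) by blast
  then obtain x where x: "\<And>i. x i \<in> maxideal (R i) \<and> x i \<noteq> 0 \<and>
      (\<forall>y\<in>maxideal (R i). y / x i \<in> R (Suc i) \<and> \<not> unit_in (R (Suc i)) y)"
    by metis
  interpret principal_local_chain R x S
    using assms(1,3,4) x unfolding regular_local_def by unfold_locales auto
  have "dominates S S" unfolding dominates_def maxideal_S using local_S by auto
  then show ?thesis
    using DVR_if_noetherian DVR_if_dominated DVR_imp_noetherian DVR_imp_discrete_valuation by blast
qed

end
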